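(* Let $\mathfrak{n}\in A_+$ and $\gamma=\begin{pmatrix}a&b\\c&d\end{pmatrix}\in\mathrm{GL}_2(A)$. Then there exist $u\in K_\infty$ and $\gamma_0\in\Gamma_0(\mathfrak{n})$ such that $\gamma_0\gamma e_0=e_g$, where $$g=w_\mathfrak{n}\begin{pmatrix}\pi_\infty^{\deg\mathfrak{n}+2\delta_\mathfrak{n}(c,d)+\epsilon_\mathfrak{n}(c,d)}&u\\0&1\end{pmatrix}\begin{pmatrix}0&1\\\pi_\infty&0\end{pmatrix}^{\epsilon_\mathfrak{n}(c,d)},\qquad w_\mathfrak{n}=\begin{pmatrix}0&-1\\\mathfrak{n}&0\end{pmatrix}.$$
   Context: $\mathbb{F}_q$ a finite field, $A=\mathbb{F}_q[\theta]$, $A_+$ the monic polynomials, $\deg0=-\infty$; $\pi_\infty=\theta^{-1}$, $K_\infty=\mathbb{F}_q((\pi_\infty))$, $O_\infty=\mathbb{F}_q[[\pi_\infty]]$, $\mathcal{I}_\infty$ the matrices in $\mathrm{GL}_2(O_\infty)$ with lower-left entry in $\pi_\infty O_\infty$. Oriented edges of the Bruhat–Tits tree: cosets $\mathrm{GL}_2(K_\infty)/K_\infty^\times\mathcal{I}_\infty$, with $e_g$ the coset of $g$, left action of $\mathrm{GL}_2(K_\infty)$, and $e_0=e_I$. $\Gamma_0(\mathfrak{n})=\{\begin{pmatrix}a&b\\c&d\end{pmatrix}\in\mathrm{GL}_2(A):\mathfrak{n}\mid c\}$. For coprime $c,d\in A$ (as for the bottom row of $\gamma$), $\delta_\mathfrak{n}(c,d)=\min\{\max(\deg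 x,\deg y): x,y\in A,\ \gcd(cx+dy,\mathfrak{n})=1\}$, and $\epsilon_\mathfrak{n}(c,d)=0$ if there exist $x_0,y_0\in A$ with $\deg y_0<\deg x_0=\delta_\mathfrak{n}(c,d)$ and $\gcd(cx_0+dy_0,\mathfrak{n})=1$, and $\epsilon_\mathfrak{n}(c,d)=1$ otherwise. *)

theory Defs
  imports "HOL-Computational_Algebra.Polynomial" "HOL-Computational_Algebra.Formal_Laurent_Series"
    "HOL-Computational_Algebra.Polynomial_Factorial"
begin

text \<open>Setting: the finite field F_q is a type 'a of class {field, finite};
  A = F_q[theta] is 'a poly; K_inf = F_q((pi_inf)) is 'a fls with pi_inf = fls_X,
  so that theta = fls_X_inv.\<close>

datatype 'b mat2 = Mat2 (m11: 'b) (m12: 'b) (m21: 'b) (m22: 'b)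

definition mmul :: "'b::semiring_1 mat2 \<Rightarrow> 'b mat2 \<Rightarrow> 'b mat2" where
  "mmul X Y = Mat2 (m11 X * m11 Y + m12 X * m21 Y) (m11 X * m12 Y + m12 X * m22 Y)
                   (m21 X * m11 Y + m22 X * m21 Y) (m21 X * m12 Y + m22 X * m22 Y)"

definition mdet :: "'b::comm_ring_1 mat2 \<Rightarrow> 'b" where
  "mdet X = m11 X * m22 X - m12 X * m21 X"

definition mid :: "'b::{zero,one} mat2" where
  "mid = Mat2 1 0 0 1"

definition mscale :: "'b::times \<Rightarrow> 'b mat2 \<Rightarrow> 'b mat2" where
  "mscale l X = Mat2 (l * m11 X) (l * m12 X) (l * m21 X) (l * m22 X)"

fun mpow :: "'b::semiring_1 mat2 \<Rightarrow> nat \<Rightarrow> 'b mat2" where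
  "mpow X 0 = mid"
| "mpow X (Suc k) = mmul (mpow X k) X"

definition embA :: "'a::field poly \<Rightarrow> 'a fls" where
  "embA p = poly (map_poly fls_const p) fls_X_inv"

definition emb_mat :: "'a::field poly mat2 \<Rightarrow> 'a fls mat2" where
  "emb_mat X = Mat2 (embA (m11 X)) (embA (m12 X)) (embA (m21 X)) (embA (m22 X))"

definition O_inf :: "'a::field fls set" where
  "O_inf = {x. x = 0 \<or> 0 \<le> fls_subdegree x}"

definition piO_inf :: "'a::field fls set" where
  "piO_inf = {x. x = 0 \<or> 1 \<le> fls_subdegree x}"

definition Iwahori :: "'a::field fls mat2 set" where
  "Iwahori = {k. m11 k \<in> O_inf \<and> m12 k \<in> O_inf \<and> m21 k \<in> piO_inf \<and> m22 k \<in> O_inf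
                \<and> mdet k \<noteq> 0 \<and> fls_subdegree (mdet k) = 0}"

text \<open>Oriented edge e_g: the coset g K_inf^\<times> I_inf; left action of GL_2(K_inf).\<close>
definition edge :: "'a::field fls mat2 \<Rightarrow> 'a fls mat2 set" where
  "edge g = {mmul g (mscale l k) | l k. l \<noteq> 0 \<and> k \<in> Iwahori}"

definition act :: "'a::field fls mat2 \<Rightarrow> 'a fls mat2 set \<Rightarrow> 'a fls mat2 set" where
  "act h E = mmul h ` E"

definition e0 :: "'a::field fls mat2 set" where
  "e0 = edge mid"

definition GL2A :: "'a::field poly mat2 set" where
  "GL2A = {X. is_unit (mdet X)}"

definition Gamma0 :: "'a::field poly \<Rightarrow> 'a poly mat2 set" where
  "Gamma0 n = {X. X \<in> GL2A \<and> n dvd m21 X}"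

text \<open>delta_n(c,d) and epsilon_n(c,d).  The minimum is over pairs (x,y) \<noteq> (0,0); for such pairs max (degree x) (degree y) agrees with the
  max of degrees under the convention deg 0 = -\<infinity>.\<close>
definition delta_n :: "'a::field_gcd poly \<Rightarrow> 'a poly \<Rightarrow> 'a poly \<Rightarrow> nat" where
  "delta_n n c d = (LEAST m. \<exists>x y. (x, y) \<noteq> (0, 0) \<and> gcd (c * x + d * y) n = 1
                                   \<and> max (degree x) (degree y) = m)"

text \<open>deg y0 < deg x0 = delta with deg 0 = -\<infinity>: x0 \<noteq> 0, degree x0 = delta,
  and (y0 = 0 or degree y0 < degree x0).\<close>
definition eps_n :: "'a::field_gcd poly \<Rightarrow> 'a poly \<Rightarrow> 'a poly \<Rightarrow> nat" where
  "eps_n n c d = (if (\<exists>x0 y0. x0 \<noteq> 0 \<and> degree x0 = delta_n n c d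
                     \<and> (y0 = 0 \<or> degree y0 < degree x0) \<and> gcd (c * x0 + d * y0) n = 1)
                  then 0 else 1)"

definition w_n :: "'a::field poly \<Rightarrow> 'a fls mat2" where
  "w_n n = Mat2 0 (-1) (embA n) 0"

end

theory Submission
  imports Defs
begin

text \<open>
  Take a pair (x, y) attaining delta_n(c, d), with deg y < deg x = delta if eps = 0 and
  deg x <= deg y = delta otherwise; by minimality it is coprime.  As c x + d y is prime to n,
  two Bezout identities produce gamma_0 in Gamma_0(n) such that gamma_0 gamma has first row
  (y, -x).  For a matrix H over K_inf with this first row and a determinant of valuation 0,
  the equation H = w_n (pi^k, u; 0, 1) (0, 1; pi, 0)^eps lambda K can be solved with a
  triangular K, and for k = deg n + 2 delta + eps this K lies in the Iwahori subgroup, since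
  x and y have valuations -deg x and -deg y.
\<close>

section \<open>The embedding of A into K_inf\<close>

lemma embA_pCons: "embA (pCons a p) = fls_const a + fls_X_inv * embA (p :: 'a::field poly)"
  by (simp add: embA_def map_poly_pCons)

lemma embA_0 [simp]: "embA (0 :: 'a::field poly) = 0"
  by (simp add: embA_def)

lemma embA_add [simp]: "embA (p + q) = embA p + embA (q :: 'a::field poly)"
proof (induction p arbitrary: q)
  case (pCons a p)
  show ?case
  proof (cases q rule: pCons_cases)
    case (pCons b q')
    then show ?thesis
      using pCons.IH[of q'] by (simp add: embA_pCons algebra_simps flip: fls_plus_const)
  qed
qed simp

lemma embA_uminus [simp]: "embA (- p) = - embA (p :: 'a::field poly)"
  by (induction p) (simp_all add: embA_pCons)

lemma embA_diff [simp]: "embA (p - q) = embA p - embA (q :: 'a::field poly)"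
  using embA_add[of p "- q"] by simp

lemma embA_smult: "embA (smult a p) = fls_const a * embA (p :: 'a::field poly)"
  by (induction p) (simp_all add: embA_pCons algebra_simps flip: fls_plus_const)

lemma embA_mult [simp]: "embA (p * q) = embA p * embA (q :: 'a::field poly)"
  by (induction p) (simp_all add: embA_pCons embA_smult algebra_simps)

lemma fls_nth_embA: "fls_nth (embA p) j = (if j \<le> 0 then coeff p (nat (- j)) else 0)"
proof (induction p arbitrary: j)
  case (pCons a p)
  show ?case
    by (auto simp: embA_pCons fls_X_inv_times_conv_shift pCons coeff_pCons split: nat.split
        intro!: arg_cong[where f = "coeff p"])
qed simp

lemma embA_eq_0_iff [simp]: "embA p = 0 \<longleftrightarrow> p = (0 :: 'a::field poly)"
proof
  assume "embA p = 0"
  then have "coeff p i = 0" for i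
    using fls_nth_embA[of p "- int i"] by simp
  then show "p = 0"
    by (simp add: poly_eqI)
qed simp

lemma fls_subdegree_embA: "p \<noteq> 0 \<Longrightarrow> fls_subdegree (embA p) = - int (degree (p :: 'a::field poly))"
  by (rule fls_subdegree_eqI) (auto simp: fls_nth_embA coeff_eq_0)

lemma is_unit_poly_nonzero_degree_0:
  assumes "is_unit (p :: 'a::field poly)"
  shows "p \<noteq> 0" "degree p = 0"
  using assms is_unit_iff_degree not_is_unit_0 by metis+

section \<open>Matrices, the Iwahori subgroup and edges\<close>

lemma mmul_assoc: "mmul (mmul X Y) Z = mmul X (mmul Y (Z :: 'b::comm_ring_1 mat2))"
  by (simp add: mmul_def algebra_simps)

lemma mmul_mid_right [simp]: "mmul X mid = (X :: 'b::comm_ring_1 mat2)"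
  by (cases X) (simp add: mmul_def mid_def)

lemma mmul_mid_left [simp]: "mmul mid X = (X :: 'b::comm_ring_1 mat2)"
  by (cases X) (simp add: mmul_def mid_def)

lemma mmul_mscale_right: "mmul X (mscale a Y) = mscale a (mmul X (Y :: 'b::comm_ring_1 mat2))"
  by (simp add: mmul_def mscale_def algebra_simps)

lemma mmul_mscale: "mmul (mscale a X) (mscale b Y) = mscale (a * b) (mmul X (Y :: 'b::comm_ring_1 mat2))"
  by (simp add: mmul_def mscale_def algebra_simps)

lemma mdet_mmul: "mdet (mmul X Y) = mdet X * mdet (Y :: 'b::comm_ring_1 mat2)"
  by (simp add: mmul_def mdet_def algebra_simps)

lemma mdet_mscale: "mdet (mscale a X) = a\<^sup>2 * mdet (X :: 'b::comm_ring_1 mat2)"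
  by (simp add: mdet_def mscale_def algebra_simps power2_eq_square)

lemma mdet_emb_mat: "mdet (emb_mat X) = embA (mdet X)"
  by (simp add: emb_mat_def mdet_def)

lemma emb_mat_mmul: "emb_mat (mmul X Y) = mmul (emb_mat X) (emb_mat (Y :: 'a::field poly mat2))"
  by (simp add: emb_mat_def mmul_def)

definition minv :: "'b::field mat2 \<Rightarrow> 'b mat2" where
  "minv X = mscale (inverse (mdet X)) (Mat2 (m22 X) (- m12 X) (- m21 X) (m11 X))"

lemma mmul_minv:
  assumes "mdet X \<noteq> 0"
  shows "mmul X (minv X) = mid"
proof -
  have "mmul X (Mat2 (m22 X) (- m12 X) (- m21 X) (m11 X)) = mscale (mdet X) mid"
    by (simp add: mmul_def mdet_def mscale_def mid_def algebra_simps)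
  then show ?thesis
    using assms unfolding minv_def mmul_mscale_right by (simp add: mscale_def mid_def)
qed

lemma mdet_minv:
  assumes "mdet X \<noteq> 0"
  shows "mdet (minv X) = inverse (mdet X)"
proof -
  have "mdet (Mat2 (m22 X) (- m12 X) (- m21 X) (m11 X)) = mdet X"
    by (simp add: mdet_def algebra_simps)
  then show ?thesis
    using assms by (simp add: minv_def mdet_mscale power2_eq_square field_simps)
qed

lemma O_inf_add: "x \<in> O_inf \<Longrightarrow> y \<in> O_inf \<Longrightarrow> x + y \<in> O_inf"
  unfolding O_inf_def using fls_plus_subdegree[of x y] by fastforce

lemma O_inf_mult: "x \<in> O_inf \<Longrightarrow> y \<in> O_inf \<Longrightarrow> x * y \<in> O_inf"
  unfolding O_inf_def by (cases "x = 0"; cases "y = 0") auto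

lemma O_inf_uminus: "x \<in> O_inf \<Longrightarrow> - x \<in> O_inf"
  unfolding O_inf_def by auto

lemma O_inf_inverse: "fls_subdegree x = 0 \<Longrightarrow> inverse x \<in> O_inf"
  unfolding O_inf_def by auto

lemma piO_inf_subset_O_inf: "piO_inf \<subseteq> O_inf"
  unfolding piO_inf_def O_inf_def by auto

lemma piO_inf_add: "x \<in> piO_inf \<Longrightarrow> y \<in> piO_inf \<Longrightarrow> x + y \<in> piO_inf"
  unfolding piO_inf_def using fls_plus_subdegree[of x y] by fastforce

lemma piO_inf_mult_left: "x \<in> piO_inf \<Longrightarrow> y \<in> O_inf \<Longrightarrow> x * y \<in> piO_inf"
  unfolding O_inf_def piO_inf_def by (cases "x = 0"; cases "y = 0") auto

lemma piO_inf_mult_right: "x \<in> O_inf \<Longrightarrow> y \<in> piO_inf \<Longrightarrow> x * y \<in> piO_inf"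
  using piO_inf_mult_left[of y x] by (simp add: mult.commute)

lemma piO_inf_uminus: "x \<in> piO_inf \<Longrightarrow> - x \<in> piO_inf"
  unfolding piO_inf_def by auto

lemma Iwahori_mmul:
  assumes "K \<in> Iwahori" "L \<in> Iwahori"
  shows "mmul K L \<in> Iwahori"
proof -
  have "m21 K * m11 L + m22 K * m21 L \<in> piO_inf"
    using assms by (auto simp: Iwahori_def intro!: piO_inf_add[OF piO_inf_mult_left piO_inf_mult_right])
  moreover have "m21 K \<in> O_inf" "m21 L \<in> O_inf"
    using assms piO_inf_subset_O_inf by (auto simp: Iwahori_def)
  ultimately show ?thesis
    using assms unfolding Iwahori_def mem_Collect_eq mdet_mmul
    by (auto simp: mmul_def intro!: O_inf_add O_inf_mult)
qed

lemma Iwahori_minv: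
  assumes "K \<in> Iwahori"
  shows "minv K \<in> Iwahori"
proof -
  have det: "mdet K \<noteq> 0" "fls_subdegree (mdet K) = 0"
    using assms by (auto simp: Iwahori_def)
  then show ?thesis
    using assms O_inf_inverse[OF det(2)] unfolding Iwahori_def mem_Collect_eq mdet_minv[OF det(1)]
    by (auto simp: minv_def mscale_def intro!: O_inf_mult O_inf_uminus piO_inf_mult_right piO_inf_uminus)
qed

lemma edge_mmul_Iwahori:
  assumes "l \<noteq> 0" "K \<in> Iwahori"
  shows "edge (mmul g (mscale l K)) = edge g"
proof
  show "edge (mmul g (mscale l K)) \<subseteq> edge g"
  proof
    fix Y assume "Y \<in> edge (mmul g (mscale l K))"
    then obtain l' K' where "Y = mmul g (mscale (l * l') (mmul K K'))" "l' \<noteq> 0" "K' \<in> Iwahori"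
      by (auto simp: edge_def mmul_assoc mmul_mscale)
    then show "Y \<in> edge g"
      using assms Iwahori_mmul by (fastforce simp: edge_def)
  qed
next
  show "edge g \<subseteq> edge (mmul g (mscale l K))"
  proof
    fix Y assume "Y \<in> edge g"
    then obtain l' K' where Y: "Y = mmul g (mscale l' K')" "l' \<noteq> 0" "K' \<in> Iwahori"
      by (auto simp: edge_def)
    have "mdet K \<noteq> 0"
      using assms(2) by (simp add: Iwahori_def)
    then have "mscale l' K' = mmul (mscale l K) (mscale (l' / l) (mmul (minv K) K'))"
      using assms(1) by (simp add: mmul_mscale mmul_minv flip: mmul_assoc)
    moreover have "mmul (minv K) K' \<in> Iwahori"
      using assms(2) Y(3) by (intro Iwahori_mmul Iwahori_minv)
    ultimately show "Y \<in> edge (mmul g (mscale l K))"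
      using Y assms(1) unfolding edge_def by (auto simp: mmul_assoc intro!: exI[of _ "l' / l"])
  qed
qed

lemma act_edge: "act X (edge g) = edge (mmul X g)"
  unfolding act_def edge_def by (auto simp: mmul_assoc image_iff)

section \<open>Normal forms of edges\<close>

lemma edge_eq_w_triangular:
  fixes H :: "'a::field fls mat2"
  assumes "En \<noteq> 0" "mdet H \<noteq> 0" "m12 H \<noteq> 0"
    and "m11 H = 0 \<or> fls_subdegree (m12 H) < fls_subdegree (m11 H)"
    and "int k = fls_subdegree (mdet H) - fls_subdegree En - 2 * fls_subdegree (m12 H)"
  shows "\<exists>u. edge H = edge (mmul (Mat2 0 (-1) En 0) (Mat2 (fls_X ^ k) u 0 1))"
proof -
  obtain H11 H12 H21 H22 where H: "H = Mat2 H11 H12 H21 H22"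
    by (cases H)
  define K where "K = Mat2 (mdet H / (fls_X ^ k * En * H12\<^sup>2)) 0 (H11 / H12) 1"
  \<comment> \<open>Stated for an arbitrary nonzero P: simp would turn divisions by powers of fls_X into shifts.\<close>
  have factor: "H = mmul (mmul (Mat2 0 (-1) En 0) (Mat2 P (- H22 / (En * H12)) 0 1))
              (mscale (- H12) (Mat2 (mdet H / (P * En * H12\<^sup>2)) 0 (H11 / H12) 1))"
    if "P \<noteq> 0" for P
    using assms(1,3) that by (simp add: H mmul_def mscale_def mdet_def field_simps power2_eq_square)
  have "H = mmul (mmul (Mat2 0 (-1) En 0) (Mat2 (fls_X ^ k) (- H22 / (En * H12)) 0 1)) (mscale (- H12) K)"
    unfolding K_def by (rule factor) simp_all
  moreover have "K \<in> Iwahori"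
  proof -
    have "fls_subdegree (mdet H / (fls_X ^ k * En * H12\<^sup>2)) = 0"
      using assms by (simp add: H fls_divide_subdegree fls_subdegree_pow)
    moreover have "H11 / H12 \<in> piO_inf"
      using assms(3,4) by (cases "H11 = 0") (auto simp: H piO_inf_def fls_divide_subdegree)
    ultimately show ?thesis
      using assms(1-3) by (simp add: H K_def Iwahori_def O_inf_def mdet_def)
  qed
  moreover have "- H12 \<noteq> 0"
    using assms(3) by (simp add: H)
  ultimately show ?thesis
    using edge_mmul_Iwahori by metis
qed

lemma edge_eq_w_triangular_flip:
  fixes H :: "'a::field fls mat2"
  assumes "En \<noteq> 0" "mdet H \<noteq> 0" "m11 H \<noteq> 0"
    and "m12 H = 0 \<or> fls_subdegree (m11 H) \<le> fls_subdegree (m12 H)"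
    and "int k = fls_subdegree (mdet H) - fls_subdegree En - 2 * fls_subdegree (m11 H) + 1"
  shows "\<exists>u. edge H = edge (mmul (mmul (Mat2 0 (-1) En 0) (Mat2 (fls_X ^ k) u 0 1)) (Mat2 0 1 fls_X 0))"
proof -
  obtain H11 H12 H21 H22 where H: "H = Mat2 H11 H12 H21 H22"
    by (cases H)
  define K where "K = Mat2 1 (H12 / H11) 0 (- (fls_X * mdet H) / (fls_X ^ k * En * H11\<^sup>2))"
  have factor: "H = mmul (mmul (mmul (Mat2 0 (-1) En 0) (Mat2 P (- H21 / (En * H11)) 0 1)) (Mat2 0 1 X 0))
              (mscale (- H11 / X) (Mat2 1 (H12 / H11) 0 (- (X * mdet H) / (P * En * H11\<^sup>2))))"
    if "P \<noteq> 0" "X \<noteq> 0" for P X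
    using assms(1,3) that by (simp add: H mmul_def mscale_def mdet_def field_simps power2_eq_square)
  have "H = mmul (mmul (mmul (Mat2 0 (-1) En 0) (Mat2 (fls_X ^ k) (- H21 / (En * H11)) 0 1)) (Mat2 0 1 fls_X 0))
            (mscale (- H11 / fls_X) K)"
    unfolding K_def by (rule factor) simp_all
  moreover have "K \<in> Iwahori"
  proof -
    have "fls_subdegree (- (fls_X * mdet H) / (fls_X ^ k * En * H11\<^sup>2)) = 0"
      using assms by (simp add: H fls_divide_subdegree fls_subdegree_pow)
    moreover have "H12 / H11 \<in> O_inf"
      using assms(3,4) by (cases "H12 = 0") (auto simp: H O_inf_def fls_divide_subdegree)
    ultimately show ?thesis
      using assms(1-3) by (simp add: H K_def Iwahori_def O_inf_def piO_inf_def mdet_def)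
  qed
  moreover have "- H11 / fls_X \<noteq> 0"
    using assms(3) by (metis H mat2.sel(1) divide_eq_0_iff fls_X_nonzero neg_equal_0_iff_equal)
  ultimately show ?thesis
    using edge_mmul_Iwahori by metis
qed

lemma edge_emb_mat_normal_form:
  fixes h :: "'a::field poly mat2"
  assumes "is_unit (mdet h)" "n \<noteq> 0" "e \<le> 1" "m11 h = y" "m12 h = - x"
    and shape: "if e = 0 then x \<noteq> 0 \<and> degree x = k \<and> (y = 0 \<or> degree y < k)
      else y \<noteq> 0 \<and> degree y = k \<and> (x = 0 \<or> degree x \<le> k)"
  shows "\<exists>u. edge (emb_mat h) =
    edge (mmul (mmul (w_n n) (Mat2 (fls_X ^ (degree n + 2 * k + e)) u 0 1)) (mpow (Mat2 0 1 fls_X 0) e))"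
proof -
  define H where "H = emb_mat h"
  have "mdet h \<noteq> 0" "degree (mdet h) = 0"
    using assms(1) by (rule is_unit_poly_nonzero_degree_0)+
  then have det: "mdet H \<noteq> 0" "fls_subdegree (mdet H) = 0"
    by (simp_all add: H_def mdet_emb_mat fls_subdegree_embA)
  have H11: "m11 H = 0 \<longleftrightarrow> y = 0" "y \<noteq> 0 \<Longrightarrow> fls_subdegree (m11 H) = - int (degree y)"
    and H12: "m12 H = 0 \<longleftrightarrow> x = 0" "x \<noteq> 0 \<Longrightarrow> fls_subdegree (m12 H) = - int (degree x)"
    using assms(4,5) by (simp_all add: H_def emb_mat_def fls_subdegree_embA)
  have w: "w_n n = Mat2 0 (-1) (embA n) 0" "embA n \<noteq> 0" "fls_subdegree (embA n) = - int (degree n)"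
    using assms(2) by (simp_all add: w_n_def fls_subdegree_embA)
  show ?thesis
  proof (cases "e = 0")
    case True
    with shape have "m12 H \<noteq> 0" "fls_subdegree (m12 H) = - int k"
      "m11 H = 0 \<or> fls_subdegree (m12 H) < fls_subdegree (m11 H)"
      using H11 H12 by auto
    then show ?thesis
      using edge_eq_w_triangular[of "embA n" H "degree n + 2 * k"] det w True by (simp add: H_def)
  next
    case False
    with shape have "m11 H \<noteq> 0" "fls_subdegree (m11 H) = - int k"
      "m12 H = 0 \<or> fls_subdegree (m11 H) \<le> fls_subdegree (m12 H)"
      using H11 H12 by auto
    moreover have "e = 1"
      using False assms(3) by simp
    ultimately show ?thesis
      using edge_eq_w_triangular_flip[of "embA n" H "degree n + 2 * k + 1"] det w by (simp add: H_def)
  qed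
qed

section \<open>Minimal pairs for delta_n and eps_n\<close>

lemma delta_n_le:
  fixes x y :: "'a::field_gcd poly"
  assumes "(x, y) \<noteq> (0, 0)" "coprime (c * x + d * y) n"
  shows "delta_n n c d \<le> max (degree x) (degree y)"
  unfolding delta_n_def using assms
  by (intro Least_le exI[of _ x] exI[of _ y]) simp

lemma delta_n_attained:
  fixes c d :: "'a::field_gcd poly"
  assumes "coprime c d"
  obtains x y where "(x, y) \<noteq> (0, 0)" "coprime (c * x + d * y) n"
    "max (degree x) (degree y) = delta_n n c d"
proof -
  define attained where "attained m \<longleftrightarrow>
    (\<exists>x y. (x, y) \<noteq> (0, 0) \<and> gcd (c * x + d * y) n = 1 \<and> max (degree x) (degree y) = m)" for m
  obtain s t where "s * c + t * d = 1"
    using assms bezout_coefficients_fst_snd[of c d] by auto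
  then have "attained (max (degree s) (degree t))"
    unfolding attained_def by (intro exI[of _ s] exI[of _ t]) (auto simp: mult.commute)
  then have "attained (delta_n n c d)"
    unfolding delta_n_def attained_def[symmetric] by (rule LeastI)
  then show ?thesis
    unfolding attained_def by (elim exE conjE) (rule that; auto)
qed

lemma delta_n_attained_coprime:
  fixes x y :: "'a::field_gcd poly"
  assumes nonzero: "(x, y) \<noteq> (0, 0)" and admissible: "coprime (c * x + d * y) n"
    and minimal: "max (degree x) (degree y) = delta_n n c d"
  shows "coprime x y"
proof -
  define g where "g = gcd x y"
  obtain x' y' where x': "x = g * x'" and y': "y = g * y'"
    unfolding g_def by (meson gcd_dvd1 gcd_dvd2 dvdE)
  have "g \<noteq> 0" "(x', y') \<noteq> (0, 0)"
    using nonzero x' y' by auto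
  have "coprime (g * (c * x' + d * y')) n"
    using admissible unfolding x' y' by (simp add: algebra_simps)
  then have "coprime (c * x' + d * y') n"
    by simp
  with \<open>(x', y') \<noteq> (0, 0)\<close> have "delta_n n c d \<le> max (degree x') (degree y')"
    by (rule delta_n_le)
  moreover have "max (degree x) (degree y) = degree g + max (degree x') (degree y')"
    using \<open>g \<noteq> 0\<close> \<open>(x', y') \<noteq> (0, 0)\<close> unfolding x' y'
    by (cases "x' = 0"; cases "y' = 0") (simp_all add: degree_mult_eq)
  ultimately have "degree g = 0"
    using minimal by linarith
  then have "is_unit g"
    using \<open>g \<noteq> 0\<close> by (simp add: is_unit_iff_degree)
  then show ?thesis
    unfolding g_def by (rule is_unit_gcd[THEN iffD1])
qed

lemma eps_n_witness:
  fixes c d :: "'a::field_gcd poly"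
  assumes "coprime c d"
  obtains x y where "coprime x y" "coprime (c * x + d * y) n"
    "if eps_n n c d = 0
     then x \<noteq> 0 \<and> degree x = delta_n n c d \<and> (y = 0 \<or> degree y < delta_n n c d)
     else y \<noteq> 0 \<and> degree y = delta_n n c d \<and> (x = 0 \<or> degree x \<le> delta_n n c d)"
proof (cases "eps_n n c d = 0")
  case True
  then obtain x y where x: "x \<noteq> 0" "degree x = delta_n n c d" and y: "y = 0 \<or> degree y < degree x"
    and admissible: "coprime (c * x + d * y) n"
    unfolding eps_n_def coprime_iff_gcd_eq_1 by (auto split: if_splits)
  have "max (degree x) (degree y) = delta_n n c d"
    using x y by auto
  then have "coprime x y"
    using x(1) admissible by (intro delta_n_attained_coprime[of x y c d n]) simp_all
  with admissible show ?thesis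
    using True x y by (intro that) simp_all
next
  case False
  obtain x y where nonzero: "(x, y) \<noteq> (0, 0)" and admissible: "coprime (c * x + d * y) n"
    and minimal: "max (degree x) (degree y) = delta_n n c d"
    using delta_n_attained[OF assms] .
  have "y \<noteq> 0 \<and> degree y = delta_n n c d"
  proof (rule ccontr)
    assume "\<not> (y \<noteq> 0 \<and> degree y = delta_n n c d)"
    then have "x \<noteq> 0 \<and> degree x = delta_n n c d \<and> (y = 0 \<or> degree y < degree x)"
      using nonzero minimal by (auto simp: max_def split: if_splits)
    then have "\<exists>x y. x \<noteq> 0 \<and> degree x = delta_n n c d \<and> (y = 0 \<or> degree y < degree x)
        \<and> gcd (c * x + d * y) n = 1"
      using admissible by (intro exI[of _ x] exI[of _ y]) auto
    then have "eps_n n c d = 0"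
      unfolding eps_n_def by (simp only: if_True)
    with False show False ..
  qed
  moreover have "coprime x y"
    using nonzero admissible minimal by (rule delta_n_attained_coprime)
  moreover have "degree x \<le> delta_n n c d"
    using minimal max.cobounded1 by metis
  ultimately show ?thesis
    using False admissible by (intro that) auto
qed

section \<open>Moving the first row by Gamma_0(n)\<close>

lemma GL2A_coprime_bottom_row:
  assumes "\<gamma> \<in> GL2A"
  shows "coprime (m21 \<gamma>) (m22 \<gamma>)"
proof (rule coprimeI)
  fix e assume "e dvd m21 \<gamma>" "e dvd m22 \<gamma>"
  then have "e dvd mdet \<gamma>"
    by (simp add: mdet_def dvd_diff dvd_mult dvd_mult2)
  then show "is_unit e"
    using assms unfolding GL2A_def by (blast intro: dvd_unit_imp_unit)
qed

lemma Gamma0_mmul_first_row: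
  fixes \<gamma> :: "'a::field_gcd poly mat2"
  assumes "\<gamma> \<in> GL2A" "coprime x y" "coprime (m21 \<gamma> * x + m22 \<gamma> * y) n"
  obtains \<gamma>0 where "\<gamma>0 \<in> Gamma0 n" "m11 (mmul \<gamma>0 \<gamma>) = y" "m12 (mmul \<gamma>0 \<gamma>) = - x"
proof -
  obtain a b c d where \<gamma>: "\<gamma> = Mat2 a b c d"
    by (cases \<gamma>)
  define D where "D = mdet \<gamma>"
  have "is_unit D"
    using assms(1) by (simp add: GL2A_def D_def)
  then obtain D' where "D * D' = 1"
    by (elim dvdE) (use that in simp)
  define \<alpha> where "\<alpha> = c * x + d * y"
  define \<beta> where "\<beta> = - (a * x + b * y)"
  obtain s t where "s * x + t * y = 1"
    using assms(2) bezout_coefficients_fst_snd[of x y] by auto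
  obtain R S where "R * \<alpha> + S * n = 1"
    using assms(3) bezout_coefficients_fst_snd[of \<alpha> n] by (auto simp: \<gamma> \<alpha>_def)
  define P where "P = t * a - s * b"
  define Q where "Q = t * c - s * d"
  \<comment> \<open>The first row D' (\<alpha>, \<beta>) is (y, -x) times the inverse of \<gamma>; the second row is the one that
    makes the determinant 1, by the two Bezout identities.\<close>
  define \<gamma>0 where "\<gamma>0 = Mat2 (D' * \<alpha>) (D' * \<beta>) (- (n * S * Q)) (D * R + n * S * P)"
  have "\<alpha> * P + \<beta> * Q = D * (s * x + t * y)"
    by (simp add: \<alpha>_def \<beta>_def P_def Q_def D_def \<gamma> mdet_def algebra_simps)
  with \<open>s * x + t * y = 1\<close> have "\<alpha> * P + \<beta> * Q = D"
    by simp
  have "mdet \<gamma>0 = D' * (D * R * \<alpha> + n * S * (\<alpha> * P + \<beta> * Q))"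
    by (simp add: \<gamma>0_def mdet_def algebra_simps)
  also have "\<dots> = D * D' * (R * \<alpha> + S * n)"
    using \<open>\<alpha> * P + \<beta> * Q = D\<close> by (simp add: algebra_simps)
  finally have "mdet \<gamma>0 = 1"
    using \<open>D * D' = 1\<close> \<open>R * \<alpha> + S * n = 1\<close> by simp
  then have "\<gamma>0 \<in> Gamma0 n"
    by (simp add: Gamma0_def GL2A_def \<gamma>0_def)
  moreover have "m11 (mmul \<gamma>0 \<gamma>) = D * D' * y" "m12 (mmul \<gamma>0 \<gamma>) = - (D * D' * x)"
    by (simp_all add: \<gamma>0_def \<gamma> \<alpha>_def \<beta>_def D_def mmul_def mdet_def algebra_simps)
  ultimately show ?thesis
    using that \<open>D * D' = 1\<close> by simp
qed

theorem lemma4p2: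
  fixes n :: "'a::{field_gcd,finite} poly" and \<gamma> :: "'a poly mat2"
  assumes "lead_coeff n = 1"
    and "\<gamma> \<in> GL2A"
  shows "\<exists>(u::'a fls) \<gamma>0. \<gamma>0 \<in> Gamma0 n \<and>
           act (emb_mat \<gamma>0) (act (emb_mat \<gamma>) e0) =
           edge (mmul (mmul (w_n n)
                   (Mat2 (fls_X ^ (degree n + 2 * delta_n n (m21 \<gamma>) (m22 \<gamma>) + eps_n n (m21 \<gamma>) (m22 \<gamma>))) u 0 1))
                 (mpow (Mat2 0 1 fls_X 0) (eps_n n (m21 \<gamma>) (m22 \<gamma>))))"
proof -
  define \<delta> where "\<delta> = delta_n n (m21 \<gamma>) (m22 \<gamma>)"
  define \<epsilon> where "\<epsilon> = eps_n n (m21 \<gamma>) (m22 \<gamma>)"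
  obtain x y where "coprime x y" "coprime (m21 \<gamma> * x + m22 \<gamma> * y) n" and shape:
    "if \<epsilon> = 0 then x \<noteq> 0 \<and> degree x = \<delta> \<and> (y = 0 \<or> degree y < \<delta>)
     else y \<noteq> 0 \<and> degree y = \<delta> \<and> (x = 0 \<or> degree x \<le> \<delta>)"
    unfolding \<delta>_def \<epsilon>_def using GL2A_coprime_bottom_row[OF assms(2)] by (rule eps_n_witness)
  then obtain \<gamma>0 where "\<gamma>0 \<in> Gamma0 n" and first_row: "m11 (mmul \<gamma>0 \<gamma>) = y" "m12 (mmul \<gamma>0 \<gamma>) = - x"
    using Gamma0_mmul_first_row[OF assms(2)] by blast
  have "is_unit (mdet (mmul \<gamma>0 \<gamma>))"
    using \<open>\<gamma>0 \<in> Gamma0 n\<close> assms(2) by (simp add: Gamma0_def GL2A_def mdet_mmul is_unit_mult_iff)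
  moreover have "n \<noteq> 0" "\<epsilon> \<le> 1"
    using assms(1) by (auto simp: \<epsilon>_def eps_n_def)
  ultimately obtain u where "edge (emb_mat (mmul \<gamma>0 \<gamma>)) =
      edge (mmul (mmul (w_n n) (Mat2 (fls_X ^ (degree n + 2 * \<delta> + \<epsilon>)) u 0 1)) (mpow (Mat2 0 1 fls_X 0) \<epsilon>))"
    using edge_emb_mat_normal_form[OF _ _ _ first_row shape] by blast
  moreover have "act (emb_mat \<gamma>0) (act (emb_mat \<gamma>) e0) = edge (emb_mat (mmul \<gamma>0 \<gamma>))"
    by (simp add: e0_def act_edge emb_mat_mmul mmul_assoc)
  ultimately show ?thesis
    using \<open>\<gamma>0 \<in> Gamma0 n\<close> unfolding \<delta>_def \<epsilon>_def by blast
qed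

end
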